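(* Let $\kappa\in(0,4)$, let $u_0$ be as defined below, and let $\xi\in\mathbb{R}$. The function $u(\tau)=(1-\xi)u_0(\tau)+\xi$, $\tau\ge0$, which satisfies $u(0)=\xi$, $u'(0)=1-\xi$ and, for $\tau>0$, $$u''+(2-\kappa)u'+u=1+\sqrt{\frac{\kappa}{\pi\tau}}\,(\xi-1),$$ approaches its steady state value $1$ monotonically as $\tau\to\infty$: it is strictly increasing on $[0,\infty)$ if $\xi<1$, strictly decreasing if $\xi>1$, constant if $\xi=1$, and in all cases $u(\tau)\to1$.
   Context: For $\kappa\in(0,4)$, $\alpha,\beta$ are the roots of $m^2+(2-\kappa)m+1=0$ with $\operatorname{Im}\alpha>0$, $\beta=\overline\alpha$; square roots are principal; $\operatorname{Erfc}(z)=1-\frac{2}{\sqrt\pi}\int_0^z e^{-s^2}ds$ for complex $z$. The function $u_0$ is $$u_0(\tau)=1+\frac{\sqrt{\kappa}}{\alpha-\beta}\left[\frac{e^{\alpha\tau}\operatorname{Erfc}\sqrt{\alpha\tau}}{\sqrt{\alpha}}-\frac{e^{\beta\tau}\operatorname{Erfc}\sqrt{\beta\tau}}{\sqrt{\beta}}\right].$$ *)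

theory Defs
  imports "HOL-Complex_Analysis.Complex_Analysis"
begin

definition Erfc :: "complex \<Rightarrow> complex" where
  "Erfc z = 1 - (2 / complex_of_real (sqrt pi)) *
              contour_integral (linepath 0 z) (\<lambda>s. exp (- (s ^ 2)))"

definition alpha :: "real \<Rightarrow> complex" where
  "alpha \<kappa> = (THE m. m ^ 2 + complex_of_real (2 - \<kappa>) * m + 1 = 0 \<and> Im m > 0)"

definition beta :: "real \<Rightarrow> complex" where
  "beta \<kappa> = cnj (alpha \<kappa>)"

definition u0 :: "real \<Rightarrow> real \<Rightarrow> complex" where
  "u0 \<kappa> \<tau> = 1 + complex_of_real (sqrt \<kappa>) / (alpha \<kappa> - beta \<kappa>) *
     ( exp (alpha \<kappa> * \<tau>) * Erfc (csqrt (alpha \<kappa> * \<tau>)) / csqrt (alpha \<kappa>)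
     - exp (beta \<kappa> * \<tau>) * Erfc (csqrt (beta \<kappa> * \<tau>)) / csqrt (beta \<kappa>))"

end

theory Submission
  imports Defs "HOL-Probability.Probability" "HOL-Real_Asymp.Real_Asymp"
begin

(*
  For a on the unit circle off the real axis and tau >= 0,

    exp (a tau) Erfc (sqrt (a tau)) / sqrt a = 2/pi * integral_0^oo exp (-tau s^2) / (s^2 + a) ds.

  At tau = 0 this is the elementary integral pi / (2 sqrt a), computed with a complex arctan
  primitive. For the difference of the two sides write

    (1 - exp (-tau (s^2 + a))) / (s^2 + a) = integral_0^1 2 tau t exp (-tau t^2 (s^2 + a)) dt

  and exchange the order of integration: the s-integral becomes a Gaussian and what remains is
  exactly the integral over [0, 1] defining Erfc (sqrt (a tau)).

  Applied to alpha and beta = cnj alpha, for which (s^2 + alpha)(s^2 + beta) = s^4 + (kappa - 2) s^2 + 1,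
  this gives u0 tau = 1 - 2 sqrt kappa / pi * P tau with
  P tau = integral_0^oo exp (-tau s^2) / (s^4 + (kappa - 2) s^2 + 1) ds.
  The weight is positive and integrable, so P is strictly decreasing and tends to 0 by dominated
  convergence; hence u = 1 - (1 - xi) (2 sqrt kappa / pi) P moves monotonically to 1, in the
  direction given by the sign of 1 - xi.
*)

lemma alpha_eq:
  assumes "0 < \<kappa>" "\<kappa> < 4"
  shows "alpha \<kappa> = Complex ((\<kappa> - 2) / 2) (sqrt (\<kappa> * (4 - \<kappa>)) / 2)"
proof -
  define A where "A = Complex ((\<kappa> - 2) / 2) (sqrt (\<kappa> * (4 - \<kappa>)) / 2)"
  have pos: "0 < \<kappa> * (4 - \<kappa>)"
    using assms by simp
  then have Im_A: "0 < Im A"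
    by (simp add: A_def)
  have A_cnj_A: "A * cnj A = 1"
    using pos by (simp add: A_def complex_eq_iff power2_eq_square field_simps)
  have A_add_cnj_A: "A + cnj A = of_real (\<kappa> - 2)"
    by (simp add: A_def complex_eq_iff)
  have factor: "m\<^sup>2 + of_real (2 - \<kappa>) * m + 1 = (m - A) * (m - cnj A)" for m
  proof -
    have "(m - A) * (m - cnj A) = m\<^sup>2 - (A + cnj A) * m + A * cnj A"
      by (simp add: algebra_simps power2_eq_square)
    then show ?thesis
      by (simp add: A_cnj_A A_add_cnj_A algebra_simps)
  qed
  have root_iff: "m\<^sup>2 + of_real (2 - \<kappa>) * m + 1 = 0 \<and> 0 < Im m \<longleftrightarrow> m = A" for m
    using Im_A unfolding factor by auto
  show ?thesis
    unfolding alpha_def A_def[symmetric] using root_iff by (intro the_equality) blast+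
qed

lemma
  assumes "0 < \<kappa>" "\<kappa> < 4"
  shows norm_alpha: "norm (alpha \<kappa>) = 1"
    and Im_alpha_pos: "0 < Im (alpha \<kappa>)"
    and alpha_add_beta: "alpha \<kappa> + beta \<kappa> = of_real (\<kappa> - 2)"
    and alpha_mult_beta: "alpha \<kappa> * beta \<kappa> = 1"
proof -
  have pos: "0 < \<kappa> * (4 - \<kappa>)"
    using assms by simp
  have "((\<kappa> - 2) / 2)\<^sup>2 + (sqrt (\<kappa> * (4 - \<kappa>)) / 2)\<^sup>2 = 1"
    using pos by (simp add: power_divide field_simps power2_eq_square)
  then show "norm (alpha \<kappa>) = 1" "alpha \<kappa> * beta \<kappa> = 1"
    by (simp_all add: alpha_eq[OF assms] beta_def cmod_def complex_eq_iff power2_eq_square)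
  show "0 < Im (alpha \<kappa>)"
    using pos by (simp add: alpha_eq[OF assms])
  show "alpha \<kappa> + beta \<kappa> = of_real (\<kappa> - 2)"
    by (simp add: alpha_eq[OF assms] beta_def complex_eq_iff)
qed

lemma
  assumes "0 < \<kappa>" "\<kappa> < 4"
  shows norm_beta: "norm (beta \<kappa>) = 1"
    and Im_beta_neg: "Im (beta \<kappa>) < 0"
  using norm_alpha[OF assms] Im_alpha_pos[OF assms] by (simp_all add: beta_def)

lemma csqrt_mult_of_real:
  assumes "0 \<le> t"
  shows "csqrt (a * of_real t) = csqrt a * of_real (sqrt t)"
proof (rule csqrt_unique)
  show "(csqrt a * of_real (sqrt t))\<^sup>2 = a * of_real t"
    using assms by (simp add: power_mult_distrib flip: of_real_power)
  show "0 < Re (csqrt a * of_real (sqrt t)) \<or>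
      Re (csqrt a * of_real (sqrt t)) = 0 \<and> 0 \<le> Im (csqrt a * of_real (sqrt t))"
    using csqrt_principal[of a] assms by (cases "t = 0") auto
qed

lemma Re_csqrt_pos:
  assumes "Im a \<noteq> 0"
  shows "0 < Re (csqrt a)"
proof (rule ccontr)
  assume "\<not> 0 < Re (csqrt a)"
  then have "Re (csqrt a) = 0"
    using Re_csqrt[of a] by simp
  then have "Im ((csqrt a)\<^sup>2) = 0"
    by (simp add: power2_eq_square)
  with assms show False
    by simp
qed

lemma of_real_square_add_neq_0:
  assumes "Im a \<noteq> 0"
  shows "of_real (s\<^sup>2) + a \<noteq> 0"
  using assms by (auto simp: complex_eq_iff)

lemma tendsto_Ln_add_diff_at_top:
  "((\<lambda>x::real. Ln (of_real x + c) - Ln (of_real x + d)) \<longlongrightarrow> 0) at_top"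
proof -
  have "((\<lambda>x::real. Ln (1 + c * of_real (inverse x)) - Ln (1 + d * of_real (inverse x)))
      \<longlongrightarrow> Ln (1 + c * of_real 0) - Ln (1 + d * of_real 0)) at_top"
    by (intro tendsto_intros tendsto_inverse_0_at_top filterlim_ident) auto
  moreover have "\<forall>\<^sub>F x in at_top. Ln (1 + c * of_real (inverse x)) - Ln (1 + d * of_real (inverse x))
      = Ln (of_real x + c) - Ln (of_real x + d)"
    using eventually_gt_at_top[of "max (norm c) (norm d)"]
  proof eventually_elim
    case (elim x)
    have "Ln (of_real x + e) = ln x + Ln (1 + e * of_real (inverse x))" if "norm e < x" for e
    proof -
      have x: "0 < x"
        using that norm_ge_zero[of e] by linarith
      have "norm (e * of_real (inverse x)) = norm e / x"
        using x by (simp add: norm_mult norm_inverse divide_inverse)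
      then have "norm (e * of_real (inverse x)) < 1"
        using that x by simp
      then have "1 + e * of_real (inverse x) \<noteq> 0"
        by (metis add.inverse_unique norm_minus_cancel norm_one order_less_irrefl add.commute)
      moreover have "of_real x + e = of_real x * (1 + e * of_real (inverse x))"
        using x by (simp add: algebra_simps of_real_inverse)
      ultimately show ?thesis
        using Ln_times_of_real[OF x] by (simp add: Ln_of_real[OF x])
    qed
    then show ?case
      using elim by simp
  qed
  ultimately show ?thesis
    by (simp add: tendsto_cong)
qed

lemma norm_square_add_lower_bound:
  assumes "norm a = 1" "Im a \<noteq> 0"
  obtains d :: real where "0 < d" "\<And>s. d * (1 + s\<^sup>2) \<le> norm (of_real (s\<^sup>2) + a)"
proof -
  have circle: "(Re a)\<^sup>2 + (Im a)\<^sup>2 = 1"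
    using assms(1) by (simp add: cmod_def)
  moreover have "0 < (Im a)\<^sup>2"
    using assms(2) by simp
  ultimately have "(Re a)\<^sup>2 < 1"
    by linarith
  then have Re_a: "\<bar>Re a\<bar> < 1"
    using abs_square_less_1 by blast
  have bound: "(1 + Re a) / 2 * (1 + s\<^sup>2)\<^sup>2 \<le> (s\<^sup>2 + Re a)\<^sup>2 + (Im a)\<^sup>2" for s :: real
  proof -
    have "2 * ((s\<^sup>2 + Re a)\<^sup>2 + (Im a)\<^sup>2) - (1 + Re a) * (1 + s\<^sup>2)\<^sup>2 = (1 - Re a) * (s\<^sup>2 - 1)\<^sup>2"
      using circle by algebra
    moreover have "0 \<le> (1 - Re a) * (s\<^sup>2 - 1)\<^sup>2"
      using Re_a by simp
    ultimately show ?thesis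
      by simp
  qed
  have "sqrt ((1 + Re a) / 2) * (1 + s\<^sup>2) \<le> norm (of_real (s\<^sup>2) + a)" for s :: real
  proof -
    have "sqrt ((1 + Re a) / 2) * (1 + s\<^sup>2) = sqrt ((1 + Re a) / 2 * (1 + s\<^sup>2)\<^sup>2)"
      unfolding real_sqrt_mult real_sqrt_abs by simp
    also have "\<dots> \<le> sqrt ((s\<^sup>2 + Re a)\<^sup>2 + (Im a)\<^sup>2)"
      using bound by (rule real_sqrt_le_mono)
    also have "\<dots> = norm (of_real (s\<^sup>2) + a)"
      by (simp add: cmod_def)
    finally show ?thesis .
  qed
  moreover have "0 < sqrt ((1 + Re a) / 2)"
    using Re_a by simp
  ultimately show ?thesis
    using that by blast
qed

lemma set_integrable_inverse_square_add:
  assumes "norm a = 1" "Im a \<noteq> 0"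
  shows "set_integrable lborel {0<..} (\<lambda>s::real. 1 / (of_real (s\<^sup>2) + a))"
proof -
  obtain d where d: "0 < d" "\<And>s. d * (1 + s\<^sup>2) \<le> norm (of_real (s\<^sup>2) + a)"
    using norm_square_add_lower_bound[OF assms] by blast
  have "set_integrable lborel {0<..} (\<lambda>s::real. 1 / (1 + s\<^sup>2))"
    using integrable_I0i_1_div_plus_square by (simp add: interval_lebesgue_integral_0_infty)
  then have "set_integrable lborel {0<..} (\<lambda>s::real. 1 / d * (1 / (1 + s\<^sup>2)))"
    by (rule set_integrable_mult_right)
  then show ?thesis
  proof (rule set_integrable_bound)
    show "set_borel_measurable lborel {0<..} (\<lambda>s::real. 1 / (of_real (s\<^sup>2) + a))"
      unfolding set_borel_measurable_def by measurable
    have "norm (1 / (of_real (s\<^sup>2) + a)) \<le> norm (1 / d * (1 / (1 + s\<^sup>2)))" for s :: real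
    proof -
      have pos: "0 < d * (1 + s\<^sup>2)"
        using d(1) by (simp add: add_pos_nonneg)
      have "norm (1 / (of_real (s\<^sup>2) + a)) = 1 / norm (of_real (s\<^sup>2) + a)"
        by (simp add: norm_divide)
      also have "\<dots> \<le> 1 / (d * (1 + s\<^sup>2))"
        using d(2) pos by (simp add: frac_le)
      finally show ?thesis
        using d(1) by (simp add: abs_of_pos add_pos_nonneg)
    qed
    then show "AE s in lborel. s \<in> {0<..} \<longrightarrow>
        norm (1 / (of_real (s\<^sup>2) + a)) \<le> norm (1 / d * (1 / (1 + s\<^sup>2)))"
      by simp
  qed
qed

lemma set_integrable_exp_square_scaleR:
  fixes f :: "real \<Rightarrow> 'a::{banach, second_countable_topology}"
  assumes f: "set_integrable lborel {0<..} f" and "0 \<le> \<tau>"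
  shows "set_integrable lborel {0<..} (\<lambda>s. exp (- (\<tau> * s\<^sup>2)) *\<^sub>R f s)"
proof (rule set_integrable_bound[OF f])
  have "(\<lambda>s. indicator {0<..} s *\<^sub>R f s) \<in> borel_measurable lborel"
    using f by (simp add: set_integrable_def)
  then have "(\<lambda>s. exp (- (\<tau> * s\<^sup>2)) *\<^sub>R (indicator {0<..} s *\<^sub>R f s)) \<in> borel_measurable lborel"
    by measurable
  then show "set_borel_measurable lborel {0<..} (\<lambda>s. exp (- (\<tau> * s\<^sup>2)) *\<^sub>R f s)"
    by (simp add: set_borel_measurable_def mult.commute)
  have "exp (- (\<tau> * s\<^sup>2)) \<le> 1" for s
    using \<open>0 \<le> \<tau>\<close> by simp
  then show "AE s in lborel. s \<in> {0<..} \<longrightarrow> norm (exp (- (\<tau> * s\<^sup>2)) *\<^sub>R f s) \<le> norm (f s)"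
    by (simp add: mult_left_le_one_le)
qed

text \<open>For \<open>Re b > 0\<close> this is a branch of \<open>(arctan (x / b) - pi / 2) / b\<close>.\<close>
definition arctan_primitive :: "complex \<Rightarrow> real \<Rightarrow> complex" where
  "arctan_primitive b x = (Ln (of_real x - \<i> * b) - Ln (of_real x + \<i> * b)) / (2 * \<i> * b)"

lemma
  assumes "0 < Re b"
  shows has_vector_derivative_arctan_primitive:
      "(arctan_primitive b has_vector_derivative 1 / (of_real (x\<^sup>2) + b\<^sup>2)) (at x)"
    and arctan_primitive_0: "arctan_primitive b 0 = - (of_real pi / (2 * b))"
    and arctan_primitive_tendsto_0: "(arctan_primitive b \<longlongrightarrow> 0) at_top"
proof -
  have b: "b \<noteq> 0" "of_real x - \<i> * b \<notin> \<real>\<^sub>\<le>\<^sub>0" "of_real x + \<i> * b \<notin> \<real>\<^sub>\<le>\<^sub>0" for x :: real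
    using assms by (auto simp: complex_nonpos_Reals_iff)
  have "((\<lambda>z. Ln (z - \<i> * b) - Ln (z + \<i> * b)) has_field_derivative
      inverse (of_real x - \<i> * b) - inverse (of_real x + \<i> * b)) (at (of_real x))"
    using b by (auto intro!: derivative_eq_intros)
  also have "inverse (of_real x - \<i> * b) - inverse (of_real x + \<i> * b) = 2 * \<i> * b / (of_real (x\<^sup>2) + b\<^sup>2)"
  proof -
    have "(of_real x - \<i> * b) * (of_real x + \<i> * b) = of_real (x\<^sup>2) + b\<^sup>2"
      by (simp add: algebra_simps power2_eq_square)
    moreover have "of_real x - \<i> * b \<noteq> 0" "of_real x + \<i> * b \<noteq> 0"
      using b(2,3)[of x] by auto
    ultimately show ?thesis
      by (auto simp: field_simps)
  qed
  finally have "((\<lambda>z. (Ln (z - \<i> * b) - Ln (z + \<i> * b)) / (2 * \<i> * b)) has_field_derivative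
      2 * \<i> * b / (of_real (x\<^sup>2) + b\<^sup>2) / (2 * \<i> * b)) (at (of_real x))"
    by (rule DERIV_cdivide)
  then show "(arctan_primitive b has_vector_derivative 1 / (of_real (x\<^sup>2) + b\<^sup>2)) (at x)"
    unfolding arctan_primitive_def[abs_def] using b(1) by (intro has_vector_derivative_real_field) simp
  have "Ln (\<i> * b) = Ln (- (\<i> * b)) + \<i> * pi"
    using Ln_minus[of "\<i> * b"] b(1) assms by simp
  then show "arctan_primitive b 0 = - (of_real pi / (2 * b))"
    using b(1) by (simp add: arctan_primitive_def field_simps)
  have "((\<lambda>x. (Ln (of_real x + - (\<i> * b)) - Ln (of_real x + \<i> * b)) / (2 * \<i> * b)) \<longlongrightarrow> 0 / (2 * \<i> * b)) at_top"
    by (intro tendsto_divide tendsto_Ln_add_diff_at_top tendsto_const) (use b(1) in simp)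
  then show "(arctan_primitive b \<longlongrightarrow> 0) at_top"
    by (simp add: arctan_primitive_def[abs_def])
qed

lemma integral_inverse_square_add:
  assumes "norm a = 1" "Im a \<noteq> 0"
  shows "(LINT s:{0<..}|lborel. 1 / (of_real (s\<^sup>2) + a)) = of_real pi / (2 * csqrt a)"
proof -
  define b where "b = csqrt a"
  have b: "0 < Re b" "b\<^sup>2 = a"
    using Re_csqrt_pos[OF assms(2)] by (simp_all add: b_def)
  note deriv = has_vector_derivative_arctan_primitive[OF b(1), unfolded b(2)]
  have "((arctan_primitive b \<circ> real_of_ereal) \<longlongrightarrow> arctan_primitive b 0) (at_right 0)"
  proof -
    have "(arctan_primitive b \<longlongrightarrow> arctan_primitive b 0) (at_right 0)"
      using has_vector_derivative_continuous[OF deriv]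
      by (simp add: isCont_def tendsto_mono[OF at_within_le_at])
    then show ?thesis
      unfolding zero_ereal_def ereal_tendsto_simps1 .
  qed
  moreover have "((arctan_primitive b \<circ> real_of_ereal) \<longlongrightarrow> 0) (at_left \<infinity>)"
    unfolding ereal_tendsto_simps1 by (rule arctan_primitive_tendsto_0[OF b(1)])
  moreover have "set_integrable lborel (einterval 0 \<infinity>) (\<lambda>x::real. 1 / (of_real (x\<^sup>2) + a))"
    using set_integrable_inverse_square_add[OF assms] by (simp add: zero_ereal_def)
  moreover have "isCont (\<lambda>x::real. 1 / (of_real (x\<^sup>2) + a)) x" for x
    using of_real_square_add_neq_0[OF assms(2)] by (auto intro!: continuous_intros)
  ultimately have "(LBINT x=0..\<infinity>. 1 / (of_real (x\<^sup>2) + a)) = 0 - arctan_primitive b 0"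
    using deriv by (intro interval_integral_FTC_integrable) auto
  then show ?thesis
    by (simp add: arctan_primitive_0[OF b(1)] interval_lebesgue_integral_0_infty flip: b_def)
qed

lemma has_bochner_integral_gaussian_Ioi:
  assumes "0 < c"
  shows "has_bochner_integral lborel (\<lambda>s. indicator {0<..} s *\<^sub>R exp (- (c * s\<^sup>2))) (sqrt pi / (2 * sqrt c))"
proof -
  have "sqrt c \<noteq> 0"
    using assms by simp
  from lborel_has_bochner_integral_real_affine_iff[OF this, where t = 0, THEN iffD1, OF gaussian_moment_0]
  have "has_bochner_integral lborel
      (\<lambda>s. indicator {0..} (0 + sqrt c * s) *\<^sub>R exp (- (0 + sqrt c * s)\<^sup>2)) ((sqrt pi / 2) /\<^sub>R \<bar>sqrt c\<bar>)" .
  moreover have "indicator {0..} (0 + sqrt c * s) *\<^sub>R exp (- (0 + sqrt c * s)\<^sup>2)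
      = indicator {0..} s *\<^sub>R exp (- (c * s\<^sup>2))" for s
    using assms by (simp add: indicator_def zero_le_mult_iff power_mult_distrib)
  ultimately have "has_bochner_integral lborel (\<lambda>s. indicator {0..} s *\<^sub>R exp (- (c * s\<^sup>2)))
      ((sqrt pi / 2) /\<^sub>R \<bar>sqrt c\<bar>)"
    by simp
  also have "(sqrt pi / 2) /\<^sub>R \<bar>sqrt c\<bar> = sqrt pi / (2 * sqrt c)"
    using assms by (simp add: field_simps)
  finally have "has_bochner_integral lborel (\<lambda>s. indicator {0..} s *\<^sub>R exp (- (c * s\<^sup>2)))
      (sqrt pi / (2 * sqrt c))" .
  moreover have "AE s in lborel. indicator {0..} s *\<^sub>R exp (- (c * s\<^sup>2)) = indicator {0<..} s *\<^sub>R exp (- (c * s\<^sup>2))"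
    using AE_lborel_singleton[of 0] by eventually_elim (simp add: indicator_def)
  ultimately show ?thesis
    by (subst (asm) has_bochner_integral_cong_AE) auto
qed

lemma Erfc_eq_interval_integral:
  "Erfc c = 1 - 2 / of_real (sqrt pi) * c * (LBINT t=0..1. exp (- ((of_real t * c)\<^sup>2)))"
proof -
  have "set_integrable lborel {0..1} (\<lambda>t::real. exp (- ((of_real t * c)\<^sup>2)))"
    by (intro borel_integrable_atLeastAtMost' continuous_intros)
  then have "(LBINT t=0..1. exp (- ((of_real t * c)\<^sup>2))) = integral {0..1} (\<lambda>t. exp (- ((of_real t * c)\<^sup>2)))"
    by (simp add: interval_integral_Icc[of 0 1, folded zero_ereal_def one_ereal_def]
        set_borel_integral_eq_integral)
  then show ?thesis
    unfolding Erfc_def contour_integral_integral vector_derivative_linepath_at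
    by (simp add: linepath_def scaleR_conv_of_real integral_mult_left mult.commute)
qed

lemma Erfc_csqrt_mult_of_real:
  assumes "0 \<le> \<tau>"
  shows "Erfc (csqrt (a * of_real \<tau>))
       = 1 - 2 / of_real (sqrt pi) * (csqrt a * of_real (sqrt \<tau>)) * (LBINT t=0..1. exp (- (of_real (\<tau> * t\<^sup>2) * a)))"
proof -
  have "(of_real t * (csqrt a * of_real (sqrt \<tau>)))\<^sup>2 = of_real (\<tau> * t\<^sup>2) * a" for t
    using assms by (simp add: power_mult_distrib flip: of_real_power)
  then show ?thesis
    using Erfc_eq_interval_integral[of "csqrt a * of_real (sqrt \<tau>)"] csqrt_mult_of_real[OF assms] by simp
qed

definition erfc_kernel :: "real \<Rightarrow> complex \<Rightarrow> real \<Rightarrow> real \<Rightarrow> complex" where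
  "erfc_kernel \<tau> a t s = of_real (2 * \<tau> * t) * exp (- (of_real (\<tau> * t\<^sup>2) * (of_real (s\<^sup>2) + a)))"

lemma interval_integral_erfc_kernel:
  assumes nz: "of_real (s\<^sup>2) + a \<noteq> 0"
  shows "(LBINT t=0..1. erfc_kernel \<tau> a t s)
       = (1 - exp (- (of_real \<tau> * (of_real (s\<^sup>2) + a)))) / (of_real (s\<^sup>2) + a)"
proof -
  define w where "w = of_real (s\<^sup>2) + a"
  define F where "F z = - exp (- (of_real \<tau> * z\<^sup>2 * w)) / w" for z
  have deriv: "(F has_field_derivative erfc_kernel \<tau> a t s) (at (of_real t))" for t :: real
  proof -
    have "(F has_field_derivative - (exp (- (of_real \<tau> * (of_real t)\<^sup>2 * w)) * (- (of_real \<tau> * (2 * of_real t) * w))) / w)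
        (at (of_real t))"
      unfolding F_def by (auto intro!: derivative_eq_intros simp: power2_eq_square algebra_simps)
    moreover have "- (exp (- (of_real \<tau> * (of_real t)\<^sup>2 * w)) * (- (of_real \<tau> * (2 * of_real t) * w))) / w
        = erfc_kernel \<tau> a t s"
      using nz by (simp add: erfc_kernel_def w_def field_simps)
    ultimately show ?thesis
      by simp
  qed
  have cont: "continuous_on UNIV (\<lambda>t. erfc_kernel \<tau> a t s)"
    unfolding erfc_kernel_def by (intro continuous_intros)
  have "(LBINT t=ereal 0..ereal 1. erfc_kernel \<tau> a t s) = F (of_real 1) - F (of_real 0)"
  proof (rule interval_integral_FTC_finite[where F = "\<lambda>t. F (of_real t)"])
    show "continuous_on {min 0 1..max 0 1} (\<lambda>t. erfc_kernel \<tau> a t s)"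
      by (rule continuous_on_subset[OF cont]) simp
    show "((\<lambda>t. F (of_real t)) has_vector_derivative erfc_kernel \<tau> a t s) (at t within {min 0 1..max 0 1})"
      for t :: real
      by (rule has_vector_derivative_real_field) (rule deriv)
  qed
  then show ?thesis
    by (simp add: F_def w_def diff_divide_distrib zero_ereal_def one_ereal_def)
qed

lemma erfc_kernel_gaussian_factor:
  assumes "0 < \<tau>" "0 < t"
  shows "2 * \<tau> * t * (sqrt pi / (2 * sqrt (\<tau> * t\<^sup>2))) = sqrt pi * sqrt \<tau>"
proof -
  have "sqrt (\<tau> * t\<^sup>2) = sqrt \<tau> * t"
    using assms by (simp add: real_sqrt_mult)
  then show ?thesis
    using assms by (simp add: field_simps)
qed

lemma has_bochner_integral_erfc_kernel:
  assumes "0 < \<tau>" "0 < t"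
  shows "has_bochner_integral lborel (\<lambda>s. indicator {0<..} s *\<^sub>R erfc_kernel \<tau> a t s)
    (of_real (sqrt pi * sqrt \<tau>) * exp (- (of_real (\<tau> * t\<^sup>2) * a)))"
proof -
  define C where "C = of_real (2 * \<tau> * t) * exp (- (of_real (\<tau> * t\<^sup>2) * a))"
  have "has_bochner_integral lborel (\<lambda>s. C * of_real (indicator {0<..} s *\<^sub>R exp (- (\<tau> * t\<^sup>2 * s\<^sup>2))))
      (C * of_real (sqrt pi / (2 * sqrt (\<tau> * t\<^sup>2))))"
    using assms by (intro has_bochner_integral_mult_right has_bochner_integral_of_real
        has_bochner_integral_gaussian_Ioi) simp
  also have "(\<lambda>s. C * of_real (indicator {0<..} s *\<^sub>R exp (- (\<tau> * t\<^sup>2 * s\<^sup>2))))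
      = (\<lambda>s. indicator {0<..} s *\<^sub>R erfc_kernel \<tau> a t s)"
    by (simp add: C_def erfc_kernel_def indicator_def algebra_simps fun_eq_iff flip: exp_add exp_of_real)
  also have "C * of_real (sqrt pi / (2 * sqrt (\<tau> * t\<^sup>2)))
      = of_real (2 * \<tau> * t * (sqrt pi / (2 * sqrt (\<tau> * t\<^sup>2)))) * exp (- (of_real (\<tau> * t\<^sup>2) * a))"
    by (simp add: C_def mult_ac)
  also have "\<dots> = of_real (sqrt pi * sqrt \<tau>) * exp (- (of_real (\<tau> * t\<^sup>2) * a))"
    by (simp only: erfc_kernel_gaussian_factor[OF assms])
  finally show ?thesis .
qed

lemma has_bochner_integral_norm_erfc_kernel:
  assumes "0 < \<tau>" "0 < t"
  shows "has_bochner_integral lborel (\<lambda>s. indicator {0<..} s * norm (erfc_kernel \<tau> a t s))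
    (sqrt pi * sqrt \<tau> * exp (- (\<tau> * t\<^sup>2 * Re a)))"
proof -
  define C where "C = 2 * \<tau> * t * exp (- (\<tau> * t\<^sup>2 * Re a))"
  have "has_bochner_integral lborel (\<lambda>s. C * (indicator {0<..} s *\<^sub>R exp (- (\<tau> * t\<^sup>2 * s\<^sup>2))))
      (C * (sqrt pi / (2 * sqrt (\<tau> * t\<^sup>2))))"
    using assms by (intro has_bochner_integral_mult_right has_bochner_integral_gaussian_Ioi) simp
  also have "(\<lambda>s. C * (indicator {0<..} s *\<^sub>R exp (- (\<tau> * t\<^sup>2 * s\<^sup>2))))
      = (\<lambda>s. indicator {0<..} s * norm (erfc_kernel \<tau> a t s))"
    using assms by (simp add: C_def erfc_kernel_def norm_mult norm_exp_eq_Re algebra_simps fun_eq_iff flip: exp_add)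
  also have "C * (sqrt pi / (2 * sqrt (\<tau> * t\<^sup>2)))
      = 2 * \<tau> * t * (sqrt pi / (2 * sqrt (\<tau> * t\<^sup>2))) * exp (- (\<tau> * t\<^sup>2 * Re a))"
    by (simp only: C_def mult_ac)
  also have "\<dots> = sqrt pi * sqrt \<tau> * exp (- (\<tau> * t\<^sup>2 * Re a))"
    by (simp only: erfc_kernel_gaussian_factor[OF assms])
  finally show ?thesis .
qed

lemma integrable_erfc_kernel_pair:
  assumes "0 < \<tau>"
  shows "integrable (lborel \<Otimes>\<^sub>M lborel)
    (\<lambda>(t, s). indicator {0<..1} t *\<^sub>R indicator {0<..} s *\<^sub>R erfc_kernel \<tau> a t s)"
proof (rule lborel_pair.Fubini_integrable)
  show "(\<lambda>(t, s). indicator {0<..1} t *\<^sub>R indicator {0<..} s *\<^sub>R erfc_kernel \<tau> a t s)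
      \<in> borel_measurable (lborel \<Otimes>\<^sub>M lborel)"
    unfolding erfc_kernel_def by measurable
  define g where "g t = sqrt pi * sqrt \<tau> * exp (- (\<tau> * t\<^sup>2 * Re a))" for t
  have "(\<integral>s. norm (indicator {0<..1} t *\<^sub>R indicator {0<..} s *\<^sub>R erfc_kernel \<tau> a t s) \<partial>lborel)
      = indicator {0<..1} t * g t" for t
    using has_bochner_integral_norm_erfc_kernel[OF assms, of t a]
    by (cases "t \<in> {0<..1}") (auto simp: g_def has_bochner_integral_iff norm_mult)
  moreover have "set_integrable lborel {0<..1} g"
    by (rule set_integrable_subset[of _ "{0..1}"])
      (auto simp: g_def intro!: borel_integrable_atLeastAtMost' continuous_intros)
  ultimately show "integrable lborel (\<lambda>t. \<integral>s. norm ((\<lambda>(t, s). indicator {0<..1} t *\<^sub>R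
      indicator {0<..} s *\<^sub>R erfc_kernel \<tau> a t s) (t, s)) \<partial>lborel)"
    by (simp add: set_integrable_def)
  have "integrable lborel (\<lambda>s. indicator {0<..1} t *\<^sub>R indicator {0<..} s *\<^sub>R erfc_kernel \<tau> a t s)" for t
    using has_bochner_integral_erfc_kernel[OF assms, of t a]
    by (cases "t \<in> {0<..1}") (auto simp: has_bochner_integral_iff)
  then show "AE t in lborel. integrable lborel (\<lambda>s. (\<lambda>(t, s). indicator {0<..1} t *\<^sub>R
      indicator {0<..} s *\<^sub>R erfc_kernel \<tau> a t s) (t, s))"
    by simp
qed

lemma set_integral_one_minus_exp_div:
  fixes a :: complex
  assumes "0 \<le> \<tau>" and nz: "\<And>s::real. of_real (s\<^sup>2) + a \<noteq> 0"
  shows "(LINT s:{0<..}|lborel. (1 - exp (- (of_real \<tau> * (of_real (s\<^sup>2) + a)))) / (of_real (s\<^sup>2) + a))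
       = of_real (sqrt pi * sqrt \<tau>) * (LBINT t=0..1. exp (- (of_real (\<tau> * t\<^sup>2) * a)))"
proof (cases "\<tau> = 0")
  case True
  then show ?thesis
    by simp
next
  case False
  with assms have \<tau>: "0 < \<tau>"
    by simp
  define f where "f t s = indicator {0<..1} t *\<^sub>R indicator {0<..} s *\<^sub>R erfc_kernel \<tau> a t s" for t s :: real
  have "(\<integral>s. (\<integral>t. f t s \<partial>lborel) \<partial>lborel) = (\<integral>t. (\<integral>s. f t s \<partial>lborel) \<partial>lborel)"
    using integrable_erfc_kernel_pair[OF \<tau>] unfolding f_def by (rule lborel_pair.Fubini_integral)
  moreover have "(\<integral>t. f t s \<partial>lborel)
      = indicator {0<..} s *\<^sub>R ((1 - exp (- (of_real \<tau> * (of_real (s\<^sup>2) + a)))) / (of_real (s\<^sup>2) + a))" for s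
  proof -
    have "(\<integral>t. f t s \<partial>lborel)
        = (\<integral>t. indicator {0<..} s *\<^sub>R (indicator {0<..1} t *\<^sub>R erfc_kernel \<tau> a t s) \<partial>lborel)"
      by (simp add: f_def mult.commute)
    also have "\<dots> = indicator {0<..} s *\<^sub>R (LBINT t=0..1. erfc_kernel \<tau> a t s)"
      by (subst integral_scaleR_right)
        (simp add: interval_integral_Ioc[of 0 1, folded zero_ereal_def one_ereal_def] set_lebesgue_integral_def)
    finally show ?thesis
      by (simp add: interval_integral_erfc_kernel[OF nz])
  qed
  moreover have "(\<integral>s. f t s \<partial>lborel)
      = indicator {0<..1} t *\<^sub>R (of_real (sqrt pi * sqrt \<tau>) * exp (- (of_real (\<tau> * t\<^sup>2) * a)))" for t
    using has_bochner_integral_erfc_kernel[OF \<tau>, of t a]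
    by (cases "t \<in> {0<..1}") (auto simp: f_def has_bochner_integral_iff)
  ultimately have "(LINT s:{0<..}|lborel. (1 - exp (- (of_real \<tau> * (of_real (s\<^sup>2) + a)))) / (of_real (s\<^sup>2) + a))
      = (LINT t:{0<..1}|lborel. of_real (sqrt pi * sqrt \<tau>) * exp (- (of_real (\<tau> * t\<^sup>2) * a)))"
    by (simp only: set_lebesgue_integral_def)
  then show ?thesis
    by (simp add: set_integral_mult_right interval_integral_Ioc[of 0 1, folded zero_ereal_def one_ereal_def])
qed

lemma exp_mult_Erfc_csqrt_eq_integral:
  assumes a: "norm a = 1" "Im a \<noteq> 0" and "0 \<le> \<tau>"
  shows "exp (a * of_real \<tau>) * Erfc (csqrt (a * of_real \<tau>)) / csqrt a
       = 2 / of_real pi * (LINT s:{0<..}|lborel. of_real (exp (- (\<tau> * s\<^sup>2))) / (of_real (s\<^sup>2) + a))"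
proof -
  define b where "b = csqrt a"
  have b: "b \<noteq> 0"
    using Re_csqrt_pos[OF a(2)] by (auto simp: b_def)
  define I where "I = (LBINT t=0..1. exp (- (of_real (\<tau> * t\<^sup>2) * a)))"
  define w where "w s = of_real (s\<^sup>2) + a" for s :: real
  define K where "K s = of_real (exp (- (\<tau> * s\<^sup>2))) / w s" for s :: real
  have int_inverse: "set_integrable lborel {0<..} (\<lambda>s. 1 / w s)"
    using set_integrable_inverse_square_add[OF a] by (simp add: w_def)
  have int_K: "set_integrable lborel {0<..} K"
    using set_integrable_exp_square_scaleR[OF int_inverse \<open>0 \<le> \<tau>\<close>] by (simp add: K_def[abs_def] scaleR_conv_of_real)
  have K_eq: "(1 - exp (- (of_real \<tau> * w s))) / w s = 1 / w s - exp (- (a * of_real \<tau>)) * K s" for s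
  proof -
    have "exp (- (of_real \<tau> * w s)) = exp (- (a * of_real \<tau>)) * of_real (exp (- (\<tau> * s\<^sup>2)))"
      by (simp add: w_def algebra_simps flip: exp_add exp_of_real)
    then show ?thesis
      by (simp add: K_def diff_divide_distrib)
  qed
  have "(LINT s:{0<..}|lborel. (1 - exp (- (of_real \<tau> * w s))) / w s)
      = (LINT s:{0<..}|lborel. 1 / w s) - exp (- (a * of_real \<tau>)) * (LINT s:{0<..}|lborel. K s)"
    unfolding K_eq using int_inverse int_K by (simp add: set_integral_diff set_integral_mult_right)
  then have "(LINT s:{0<..}|lborel. K s)
      = exp (a * of_real \<tau>) * ((LINT s:{0<..}|lborel. 1 / w s) - (LINT s:{0<..}|lborel. (1 - exp (- (of_real \<tau> * w s))) / w s))"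
    by (simp add: algebra_simps exp_minus field_simps)
  also have "\<dots> = exp (a * of_real \<tau>) * (of_real pi / (2 * b) - of_real (sqrt pi * sqrt \<tau>) * I)"
    using integral_inverse_square_add[OF a] set_integral_one_minus_exp_div[OF \<open>0 \<le> \<tau>\<close> of_real_square_add_neq_0[OF a(2)]]
    by (simp add: w_def b_def I_def)
  finally have integral_K: "(LINT s:{0<..}|lborel. K s)
      = exp (a * of_real \<tau>) * (of_real pi / (2 * b) - of_real (sqrt pi * sqrt \<tau>) * I)" .
  have "(of_real pi :: complex) = of_real (sqrt pi) * of_real (sqrt pi)"
    by (simp flip: of_real_mult)
  then show ?thesis
    unfolding Erfc_csqrt_mult_of_real[OF \<open>0 \<le> \<tau>\<close>] b_def[symmetric] I_def[symmetric]
      K_def[symmetric] w_def[symmetric] integral_K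
    using b by (simp add: field_simps)
qed

definition gauss_transform :: "(real \<Rightarrow> real) \<Rightarrow> real \<Rightarrow> real" where
  "gauss_transform w \<tau> = (LINT s:{0<..}|lborel. exp (- (\<tau> * s\<^sup>2)) * w s)"

lemma set_integral_pos_Ioi:
  fixes f :: "real \<Rightarrow> real"
  assumes f: "set_integrable lborel {0<..} f" and pos: "\<And>s. 0 < s \<Longrightarrow> 0 < f s"
  shows "0 < (LINT s:{0<..}|lborel. f s)"
proof -
  have nonneg: "0 \<le> indicator {0<..} s * f s" for s
    using pos[of s] by (simp add: indicator_def less_imp_le)
  have "(LINT s:{0<..}|lborel. f s) \<noteq> 0"
  proof
    assume "(LINT s:{0<..}|lborel. f s) = 0"
    then have "AE s in lborel. indicator {0<..} s * f s = 0"
      using f nonneg by (simp add: set_lebesgue_integral_def set_integrable_def integral_nonneg_eq_0_iff_AE)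
    then have "AE s in lborel. s \<notin> {0<..1::real}"
    proof eventually_elim
      case (elim s)
      then show ?case
        using pos[of s] by (auto simp: indicator_def split: if_splits)
    qed
    then have "emeasure lborel {0<..1::real} = 0"
      by (subst (asm) AE_iff_measurable[of "{0<..1}"]) auto
    then show False
      by simp
  qed
  moreover have "0 \<le> (LINT s:{0<..}|lborel. f s)"
    using nonneg by (simp add: set_lebesgue_integral_def)
  ultimately show ?thesis
    by simp
qed

lemma set_integrable_gauss_transform:
  fixes w :: "real \<Rightarrow> real"
  assumes "set_integrable lborel {0<..} w" "0 \<le> \<tau>"
  shows "set_integrable lborel {0<..} (\<lambda>s. exp (- (\<tau> * s\<^sup>2)) * w s)"
  using set_integrable_exp_square_scaleR[OF assms] by simp

lemma gauss_transform_strict_antimono: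
  assumes w: "set_integrable lborel {0<..} w" and pos: "\<And>s. 0 < s \<Longrightarrow> 0 < w s"
    and "0 \<le> x" "x < y"
  shows "gauss_transform w y < gauss_transform w x"
proof -
  have int: "set_integrable lborel {0<..} (\<lambda>s. exp (- (x * s\<^sup>2)) * w s - exp (- (y * s\<^sup>2)) * w s)"
    using assms by (intro set_integral_diff set_integrable_gauss_transform) auto
  have "0 < exp (- (x * s\<^sup>2)) * w s - exp (- (y * s\<^sup>2)) * w s" if "0 < s" for s
  proof -
    have "x * s\<^sup>2 < y * s\<^sup>2"
      using that \<open>x < y\<close> by simp
    then have "exp (- (y * s\<^sup>2)) * w s < exp (- (x * s\<^sup>2)) * w s"
      using pos[OF that] by simp
    then show ?thesis
      by simp
  qed
  then have "0 < (LINT s:{0<..}|lborel. exp (- (x * s\<^sup>2)) * w s - exp (- (y * s\<^sup>2)) * w s)"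
    by (rule set_integral_pos_Ioi[OF int])
  then show ?thesis
    using assms unfolding gauss_transform_def
    by (simp add: set_integral_diff set_integrable_gauss_transform)
qed

lemma gauss_transform_tendsto_0:
  assumes w: "set_integrable lborel {0<..} w"
  shows "(gauss_transform w \<longlongrightarrow> 0) at_top"
proof -
  define v where "v s = indicator {0<..} s * w s" for s
  have v: "integrable lborel v"
    using w by (simp add: set_integrable_def v_def[abs_def])
  then have meas: "(\<lambda>s. exp (- (\<tau> * s\<^sup>2)) * v s) \<in> borel_measurable lborel" for \<tau>
    by measurable
  have "((\<lambda>\<tau>. exp (- (\<tau> * s\<^sup>2)) * v s) \<longlongrightarrow> 0) at_top" for s :: real
  proof (cases "s = 0")
    case False
    then have "0 < s\<^sup>2"
      by simp
    then have "((\<lambda>\<tau>. exp (- (\<tau> * s\<^sup>2))) \<longlongrightarrow> 0) at_top"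
      by real_asymp
    then show ?thesis
      by (rule tendsto_mult_left_zero)
  qed (simp add: v_def)
  then have lim: "AE s in lborel. ((\<lambda>\<tau>. exp (- (\<tau> * s\<^sup>2)) * v s) \<longlongrightarrow> 0) at_top"
    by simp
  have "\<forall>\<^sub>F \<tau> in at_top. AE s in lborel. norm (exp (- (\<tau> * s\<^sup>2)) * v s) \<le> norm (v s)"
    using eventually_ge_at_top[of 0]
    by eventually_elim (simp add: abs_mult mult_left_le_one_le)
  from integral_dominated_convergence_at_top[OF _ meas integrable_norm[OF v] lim this]
  have "((\<lambda>\<tau>. \<integral>s. exp (- (\<tau> * s\<^sup>2)) * v s \<partial>lborel) \<longlongrightarrow> 0) at_top"
    by simp
  then show ?thesis
    by (simp add: gauss_transform_def[abs_def] set_lebesgue_integral_def v_def mult.left_commute)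
qed

definition u0_weight :: "real \<Rightarrow> real \<Rightarrow> real" where
  "u0_weight \<kappa> s = 1 / (s ^ 4 + (\<kappa> - 2) * s\<^sup>2 + 1)"

lemma square_add_alpha_mult_square_add_beta:
  assumes "0 < \<kappa>" "\<kappa> < 4"
  shows "(of_real (s\<^sup>2) + alpha \<kappa>) * (of_real (s\<^sup>2) + beta \<kappa>) = of_real (s ^ 4 + (\<kappa> - 2) * s\<^sup>2 + 1)"
proof -
  have "(of_real (s\<^sup>2) + alpha \<kappa>) * (of_real (s\<^sup>2) + beta \<kappa>)
      = of_real (s\<^sup>2) * of_real (s\<^sup>2) + (alpha \<kappa> + beta \<kappa>) * of_real (s\<^sup>2) + alpha \<kappa> * beta \<kappa>"
    by (simp add: algebra_simps)
  then show ?thesis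
    by (simp add: alpha_add_beta[OF assms] alpha_mult_beta[OF assms] power4_eq_xxxx power2_eq_square)
qed

lemma u0_weight_pos:
  assumes "0 < \<kappa>" "\<kappa> < 4"
  shows "0 < u0_weight \<kappa> s"
proof -
  have "complex_of_real (s ^ 4 + (\<kappa> - 2) * s\<^sup>2 + 1) = of_real ((norm (of_real (s\<^sup>2) + alpha \<kappa>))\<^sup>2)"
    using square_add_alpha_mult_square_add_beta[OF assms, of s]
      complex_norm_square[of "of_real (s\<^sup>2) + alpha \<kappa>"]
    by (simp add: beta_def)
  moreover have "of_real (s\<^sup>2) + alpha \<kappa> \<noteq> 0"
    using Im_alpha_pos[OF assms] by (intro of_real_square_add_neq_0) simp
  ultimately show ?thesis
    unfolding u0_weight_def of_real_eq_iff by simp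
qed

lemma inverse_square_add_alpha_diff:
  assumes "0 < \<kappa>" "\<kappa> < 4"
  shows "1 / (of_real (s\<^sup>2) + alpha \<kappa>) - 1 / (of_real (s\<^sup>2) + beta \<kappa>)
       = (beta \<kappa> - alpha \<kappa>) * of_real (u0_weight \<kappa> s)"
proof -
  have "of_real (s\<^sup>2) + alpha \<kappa> \<noteq> 0" "of_real (s\<^sup>2) + beta \<kappa> \<noteq> 0"
    using Im_alpha_pos[OF assms] Im_beta_neg[OF assms] by (intro of_real_square_add_neq_0; simp)+
  then show ?thesis
    unfolding u0_weight_def using square_add_alpha_mult_square_add_beta[OF assms, of s]
    by (simp add: field_simps flip: of_real_add)
qed

lemma set_integrable_u0_weight:
  assumes "0 < \<kappa>" "\<kappa> < 4"
  shows "set_integrable lborel {0<..} (u0_weight \<kappa>)"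
proof -
  have "alpha \<kappa> \<noteq> beta \<kappa>"
    using Im_alpha_pos[OF assms] Im_beta_neg[OF assms] by auto
  then have "of_real (u0_weight \<kappa> s)
      = (1 / (of_real (s\<^sup>2) + alpha \<kappa>) - 1 / (of_real (s\<^sup>2) + beta \<kappa>)) / (beta \<kappa> - alpha \<kappa>)" for s
    unfolding inverse_square_add_alpha_diff[OF assms] by simp
  moreover have "set_integrable lborel {0<..}
      (\<lambda>s. (1 / (of_real (s\<^sup>2) + alpha \<kappa>) - 1 / (of_real (s\<^sup>2) + beta \<kappa>)) / (beta \<kappa> - alpha \<kappa>))"
    using assms Im_alpha_pos[OF assms] Im_beta_neg[OF assms]
    by (intro set_integral_diff set_integrable_divide set_integrable_inverse_square_add
        norm_alpha norm_beta) auto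
  ultimately have "set_integrable lborel {0<..} (\<lambda>s. complex_of_real (u0_weight \<kappa> s))"
    by simp
  then have "complex_integrable lborel (\<lambda>s. complex_of_real (indicator {0<..} s * u0_weight \<kappa> s))"
    by (simp add: set_integrable_def scaleR_conv_of_real)
  then show ?thesis
    by (simp only: set_integrable_def complex_of_real_integrable_eq real_scaleR_def)
qed

lemma u0_eq_gauss_transform:
  assumes \<kappa>: "0 < \<kappa>" "\<kappa> < 4" and "0 \<le> \<tau>"
  shows "u0 \<kappa> \<tau> = of_real (1 - 2 * sqrt \<kappa> / pi * gauss_transform (u0_weight \<kappa>) \<tau>)"
proof -
  define f where "f a s = of_real (exp (- (\<tau> * s\<^sup>2))) / (of_real (s\<^sup>2) + a)" for a :: complex and s :: real
  define L where "L a = (LINT s:{0<..}|lborel. f a s)" for a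
  have Erfc_term: "exp (a * of_real \<tau>) * Erfc (csqrt (a * of_real \<tau>)) / csqrt a = 2 / of_real pi * L a"
    and int: "set_integrable lborel {0<..} (f a)"
    if "norm a = 1" "Im a \<noteq> 0" for a
  proof -
    show "exp (a * of_real \<tau>) * Erfc (csqrt (a * of_real \<tau>)) / csqrt a = 2 / of_real pi * L a"
      unfolding L_def f_def using that \<open>0 \<le> \<tau>\<close> by (rule exp_mult_Erfc_csqrt_eq_integral)
    show "set_integrable lborel {0<..} (f a)"
      using set_integrable_exp_square_scaleR[OF set_integrable_inverse_square_add[OF that] \<open>0 \<le> \<tau>\<close>]
      by (simp add: f_def[abs_def] scaleR_conv_of_real)
  qed
  have alpha: "norm (alpha \<kappa>) = 1" "Im (alpha \<kappa>) \<noteq> 0"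
    using norm_alpha[OF \<kappa>] Im_alpha_pos[OF \<kappa>] by auto
  have beta: "norm (beta \<kappa>) = 1" "Im (beta \<kappa>) \<noteq> 0"
    using norm_beta[OF \<kappa>] Im_beta_neg[OF \<kappa>] by auto
  have f_diff: "f (alpha \<kappa>) s - f (beta \<kappa>) s
      = (beta \<kappa> - alpha \<kappa>) * of_real (exp (- (\<tau> * s\<^sup>2)) * u0_weight \<kappa> s)" for s
  proof -
    have "f (alpha \<kappa>) s - f (beta \<kappa>) s = of_real (exp (- (\<tau> * s\<^sup>2)))
        * (1 / (of_real (s\<^sup>2) + alpha \<kappa>) - 1 / (of_real (s\<^sup>2) + beta \<kappa>))"
      by (simp add: f_def right_diff_distrib)
    also have "\<dots> = of_real (exp (- (\<tau> * s\<^sup>2))) * ((beta \<kappa> - alpha \<kappa>) * of_real (u0_weight \<kappa> s))"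
      by (simp only: inverse_square_add_alpha_diff[OF \<kappa>])
    finally show ?thesis
      by simp
  qed
  have "L (alpha \<kappa>) - L (beta \<kappa>) = (LINT s:{0<..}|lborel. f (alpha \<kappa>) s - f (beta \<kappa>) s)"
    unfolding L_def using int[OF alpha] int[OF beta] by (rule set_integral_diff(2)[symmetric])
  also have "\<dots> = (beta \<kappa> - alpha \<kappa>) * of_real (gauss_transform (u0_weight \<kappa>) \<tau>)"
    by (simp only: f_diff set_integral_mult_right set_integral_complex_of_real gauss_transform_def)
  finally have L_diff: "L (alpha \<kappa>) - L (beta \<kappa>) = (beta \<kappa> - alpha \<kappa>) * of_real (gauss_transform (u0_weight \<kappa>) \<tau>)" .
  have "alpha \<kappa> \<noteq> beta \<kappa>"
    using Im_alpha_pos[OF \<kappa>] Im_beta_neg[OF \<kappa>] by auto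
  then show ?thesis
    unfolding u0_def Erfc_term[OF alpha] Erfc_term[OF beta] right_diff_distrib[symmetric] L_diff
    by (simp add: field_simps)
qed

lemma Re_u0_strict_mono_on:
  assumes "0 < \<kappa>" "\<kappa> < 4"
  shows "strict_mono_on {0..} (\<lambda>\<tau>. Re (u0 \<kappa> \<tau>))"
proof (rule strict_mono_onI)
  fix x y :: real
  assume "x \<in> {0..}" "y \<in> {0..}" "x < y"
  then have "gauss_transform (u0_weight \<kappa>) y < gauss_transform (u0_weight \<kappa>) x"
    using assms by (intro gauss_transform_strict_antimono set_integrable_u0_weight u0_weight_pos) auto
  then have "2 * sqrt \<kappa> / pi * gauss_transform (u0_weight \<kappa>) y < 2 * sqrt \<kappa> / pi * gauss_transform (u0_weight \<kappa>) x"
    using assms by (intro mult_strict_left_mono) auto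
  with \<open>x \<in> {0..}\<close> \<open>y \<in> {0..}\<close> show "Re (u0 \<kappa> x) < Re (u0 \<kappa> y)"
    using assms by (simp add: u0_eq_gauss_transform)
qed

lemma Re_u0_tendsto_1:
  assumes "0 < \<kappa>" "\<kappa> < 4"
  shows "((\<lambda>\<tau>. Re (u0 \<kappa> \<tau>)) \<longlongrightarrow> 1) at_top"
proof -
  have "((\<lambda>\<tau>. 1 - 2 * sqrt \<kappa> / pi * gauss_transform (u0_weight \<kappa>) \<tau>) \<longlongrightarrow> 1 - 2 * sqrt \<kappa> / pi * 0) at_top"
    using assms by (intro tendsto_intros gauss_transform_tendsto_0 set_integrable_u0_weight)
  moreover have "\<forall>\<^sub>F \<tau> in at_top. 1 - 2 * sqrt \<kappa> / pi * gauss_transform (u0_weight \<kappa>) \<tau> = Re (u0 \<kappa> \<tau>)"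
    using eventually_ge_at_top[of 0] by eventually_elim (simp add: u0_eq_gauss_transform[OF assms])
  ultimately show ?thesis
    by (simp add: tendsto_cong)
qed

theorem corollary3p2:
  fixes \<kappa> \<xi> :: real and u :: "real \<Rightarrow> real"
  assumes "0 < \<kappa>" and "\<kappa> < 4"
    and "\<And>\<tau>. u \<tau> = (1 - \<xi>) * Re (u0 \<kappa> \<tau>) + \<xi>"
  shows "(\<xi> < 1 \<longrightarrow> strict_mono_on {0..} u)
       \<and> (\<xi> > 1 \<longrightarrow> monotone_on {0..} (<) (>) u)
       \<and> (\<xi> = 1 \<longrightarrow> (\<forall>\<tau>\<ge>0. u \<tau> = 1))
       \<and> (u \<longlongrightarrow> 1) at_top"
proof -
  have u: "u = (\<lambda>\<tau>. (1 - \<xi>) * Re (u0 \<kappa> \<tau>) + \<xi>)"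
    using assms(3) by auto
  note mono = Re_u0_strict_mono_on[OF assms(1,2), THEN strict_mono_onD]
  have "strict_mono_on {0..} u" if "\<xi> < 1"
    using mono that by (auto simp: u intro!: strict_mono_onI)
  moreover have "monotone_on {0..} (<) (>) u" if "\<xi> > 1"
    using mono that by (auto simp: u intro!: monotone_onI mult_strict_left_mono_neg)
  moreover have "(u \<longlongrightarrow> (1 - \<xi>) * 1 + \<xi>) at_top"
    unfolding u by (intro tendsto_intros Re_u0_tendsto_1[OF assms(1,2)])
  ultimately show ?thesis
    by (simp add: u)
qed

end
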